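(* Let $K$ be a tropical aura and $R$ a positive aura with tempered growth. Then the lexicographic product $K[\times]R$ has tempered growth.
   Context: A halo is a commutative unital semiring with a partial order compatible with $+$ and $\cdot$; an aura is a halo whose semiring is a semifield; positive means $0<1$. A halo is tropical if it is not $\{0\}$, totally ordered, and $a+b=\max(a,b)$. For positive auras $R_1,R_2$, the lexicographic product $R_1[\times]R_2$ is $\{0\}\cup(R_1^\times\times R_2^\times)$ (with $0=(0,0)$, $R_i^\times=R_i\setminus\{0\}$), with componentwise operations and the lexicographic order (first coordinate most significant). A halo $R$ has tempered growth if for every non-zero $P\in\mathbb{N}[X]$ and $x\in R$, ($x^n\le P(n)$ for all $n\in\mathbb{N}$) implies $x\le1$, natural numbers being interpreted as sums of $1$. *)

theory Defs
  imports "HOL-Computational_Algebra.Polynomial"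
begin

record 'a halo_str =
  hcarrier :: "'a set"
  hzero :: 'a
  hone :: 'a
  hadd :: "'a \<Rightarrow> 'a \<Rightarrow> 'a"
  hmul :: "'a \<Rightarrow> 'a \<Rightarrow> 'a"
  hle :: "'a \<Rightarrow> 'a \<Rightarrow> bool"

definition halo :: "'a halo_str \<Rightarrow> bool" where
  "halo R \<longleftrightarrow>
     hzero R \<in> hcarrier R \<and> hone R \<in> hcarrier R \<and>
     (\<forall>a\<in>hcarrier R. \<forall>b\<in>hcarrier R. hadd R a b \<in> hcarrier R \<and> hmul R a b \<in> hcarrier R) \<and>
     (\<forall>a\<in>hcarrier R. \<forall>b\<in>hcarrier R. \<forall>c\<in>hcarrier R.
        hadd R (hadd R a b) c = hadd R a (hadd R b c) \<and>
        hmul R (hmul R a b) c = hmul R a (hmul R b c) \<and>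
        hmul R a (hadd R b c) = hadd R (hmul R a b) (hmul R a c)) \<and>
     (\<forall>a\<in>hcarrier R. \<forall>b\<in>hcarrier R. hadd R a b = hadd R b a \<and> hmul R a b = hmul R b a) \<and>
     (\<forall>a\<in>hcarrier R. hadd R (hzero R) a = a \<and> hmul R (hone R) a = a \<and> hmul R (hzero R) a = hzero R) \<and>
     (\<forall>a\<in>hcarrier R. hle R a a) \<and>
     (\<forall>a\<in>hcarrier R. \<forall>b\<in>hcarrier R. hle R a b \<and> hle R b a \<longrightarrow> a = b) \<and>
     (\<forall>a\<in>hcarrier R. \<forall>b\<in>hcarrier R. \<forall>c\<in>hcarrier R. hle R a b \<and> hle R b c \<longrightarrow> hle R a c) \<and>
     (\<forall>a\<in>hcarrier R. \<forall>b\<in>hcarrier R. \<forall>c\<in>hcarrier R. hle R a b \<longrightarrow>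
        hle R (hadd R a c) (hadd R b c) \<and> hle R (hmul R a c) (hmul R b c))"

definition hless :: "'a halo_str \<Rightarrow> 'a \<Rightarrow> 'a \<Rightarrow> bool" where
  "hless R a b \<longleftrightarrow> hle R a b \<and> a \<noteq> b"

definition aura :: "'a halo_str \<Rightarrow> bool" where
  "aura R \<longleftrightarrow> halo R \<and> hzero R \<noteq> hone R \<and>
     (\<forall>a\<in>hcarrier R. a \<noteq> hzero R \<longrightarrow> (\<exists>b\<in>hcarrier R. hmul R a b = hone R))"

definition positive :: "'a halo_str \<Rightarrow> bool" where
  "positive R \<longleftrightarrow> hless R (hzero R) (hone R)"

definition tropical :: "'a halo_str \<Rightarrow> bool" where
  "tropical R \<longleftrightarrow> halo R \<and> hcarrier R \<noteq> {hzero R} \<and>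
     (\<forall>a\<in>hcarrier R. \<forall>b\<in>hcarrier R. hle R a b \<or> hle R b a) \<and>
     (\<forall>a\<in>hcarrier R. \<forall>b\<in>hcarrier R. hadd R a b = (if hle R a b then b else a))"

definition lex_prod :: "'a halo_str \<Rightarrow> 'b halo_str \<Rightarrow> ('a \<times> 'b) halo_str" where
  "lex_prod R1 R2 =
     \<lparr> hcarrier = {(hzero R1, hzero R2)} \<union>
                  ((hcarrier R1 - {hzero R1}) \<times> (hcarrier R2 - {hzero R2})),
       hzero = (hzero R1, hzero R2),
       hone = (hone R1, hone R2),
       hadd = (\<lambda>(a, b) (c, d). (hadd R1 a c, hadd R2 b d)),
       hmul = (\<lambda>(a, b) (c, d). (hmul R1 a c, hmul R2 b d)),
       hle = (\<lambda>(a, b) (c, d). hless R1 a c \<or> (a = c \<and> hle R2 b d)) \<rparr>"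

definition hnat :: "'a halo_str \<Rightarrow> nat \<Rightarrow> 'a" where
  "hnat R k = (hadd R (hone R) ^^ k) (hzero R)"

definition hpow :: "'a halo_str \<Rightarrow> 'a \<Rightarrow> nat \<Rightarrow> 'a" where
  "hpow R x n = (hmul R x ^^ n) (hone R)"

definition tempered_growth :: "'a halo_str \<Rightarrow> bool" where
  "tempered_growth R \<longleftrightarrow>
     (\<forall>P :: nat poly. \<forall>x\<in>hcarrier R. P \<noteq> 0 \<longrightarrow>
        (\<forall>n::nat. hle R (hpow R x n) (hnat R (poly P n))) \<longrightarrow> hle R x (hone R))"

end

theory Submission
  imports Defs
begin

text \<open>Write \<open>x = (a, b)\<close> with \<open>a \<noteq> 0\<close>. In a tropical aura every natural number is \<open>0\<close> or \<open>1\<close>,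
  so the bound for \<open>n = 1\<close> forces \<open>a \<le> 1\<close>. If \<open>a < 1\<close> we are done; if \<open>a = 1\<close>, then all powers
  of \<open>a\<close> equal \<open>1\<close>, which is never strictly below a natural number of \<open>K\<close>, so the lexicographic
  bounds collapse to \<open>b\<^sup>n \<le> P(n)\<close> in \<open>R\<close>, and tempered growth of \<open>R\<close> gives \<open>b \<le> 1\<close>.\<close>

lemma halo_zero_closed: "halo R \<Longrightarrow> hzero R \<in> hcarrier R"
  and halo_one_closed: "halo R \<Longrightarrow> hone R \<in> hcarrier R"
  by (simp_all add: halo_def)

lemma halo_add_zero_left: "halo R \<Longrightarrow> a \<in> hcarrier R \<Longrightarrow> hadd R (hzero R) a = a"
  and halo_mul_one_left: "halo R \<Longrightarrow> a \<in> hcarrier R \<Longrightarrow> hmul R (hone R) a = a"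
  unfolding halo_def by (elim conjE; metis)+

lemma halo_add_commute:
  "halo R \<Longrightarrow> a \<in> hcarrier R \<Longrightarrow> b \<in> hcarrier R \<Longrightarrow> hadd R a b = hadd R b a"
  and halo_mul_commute:
  "halo R \<Longrightarrow> a \<in> hcarrier R \<Longrightarrow> b \<in> hcarrier R \<Longrightarrow> hmul R a b = hmul R b a"
  unfolding halo_def by (elim conjE; metis)+

lemma halo_le_refl: "halo R \<Longrightarrow> a \<in> hcarrier R \<Longrightarrow> hle R a a"
  unfolding halo_def by (elim conjE; metis)

lemma halo_le_antisym:
  "halo R \<Longrightarrow> a \<in> hcarrier R \<Longrightarrow> b \<in> hcarrier R \<Longrightarrow> hle R a b \<Longrightarrow> hle R b a \<Longrightarrow> a = b"
  unfolding halo_def by (elim conjE; metis)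

lemma hpow_1:
  assumes "halo R" "a \<in> hcarrier R"
  shows "hpow R a 1 = a"
proof -
  have "hpow R a 1 = hmul R a (hone R)" by (simp add: hpow_def)
  also have "\<dots> = hmul R (hone R) a" using assms halo_one_closed halo_mul_commute by metis
  finally show ?thesis using assms halo_mul_one_left by metis
qed

lemma hpow_one:
  assumes "halo R"
  shows "hpow R (hone R) n = hone R"
  by (induction n) (simp_all add: hpow_def halo_mul_one_left[OF assms halo_one_closed[OF assms]])

lemma hnat_lex_prod: "hnat (lex_prod K R) k = (hnat K k, hnat R k)"
  by (induction k) (auto simp: hnat_def lex_prod_def)

lemma hpow_lex_prod: "hpow (lex_prod K R) (a, b) n = (hpow K a n, hpow R b n)"
  by (induction n) (auto simp: hpow_def lex_prod_def)

lemma hle_lex_prod: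
  "hle (lex_prod K R) (a, b) (c, d) \<longleftrightarrow> hless K a c \<or> (a = c \<and> hle R b d)"
  by (simp add: lex_prod_def)

lemma tropical_add:
  "tropical K \<Longrightarrow> a \<in> hcarrier K \<Longrightarrow> b \<in> hcarrier K \<Longrightarrow> hadd K a b = (if hle K a b then b else a)"
  unfolding tropical_def by blast

lemma tropical_zero_le:
  assumes "tropical K" "a \<in> hcarrier K"
  shows "hle K (hzero K) a"
proof -
  have K: "halo K" using assms(1) by (simp add: tropical_def)
  have "a = hadd K (hzero K) a" using halo_add_zero_left[OF K assms(2)] by simp
  also have "\<dots> = (if hle K (hzero K) a then a else hzero K)"
    using tropical_add[OF assms(1) halo_zero_closed[OF K] assms(2)] .
  finally show ?thesis using halo_le_refl[OF K assms(2)] by (auto split: if_splits)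
qed

lemma tropical_hnat:
  assumes "tropical K"
  shows "hnat K m = (if m = 0 then hzero K else hone K)"
proof (induction m)
  case 0
  show ?case by (simp add: hnat_def)
next
  case (Suc m)
  have K: "halo K" using assms by (simp add: tropical_def)
  note closed = halo_zero_closed[OF K] halo_one_closed[OF K]
  have "hnat K (Suc m) = hadd K (hone K) (hnat K m)" by (simp add: hnat_def)
  also have "\<dots> = hone K"
    using Suc closed tropical_add[OF assms] halo_add_commute[OF K] halo_add_zero_left[OF K]
    by (cases "m = 0") auto
  finally show ?case by simp
qed

lemma tropical_le_hnat_imp_le_one:
  assumes "tropical K" "a \<in> hcarrier K" "a \<noteq> hzero K" "hle K a (hnat K m)"
  shows "hle K a (hone K)"
proof -
  have K: "halo K" using assms(1) by (simp add: tropical_def)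
  have "hnat K m \<noteq> hzero K"
    using assms halo_le_antisym[OF K assms(2) halo_zero_closed[OF K]] tropical_zero_le by metis
  then show ?thesis using assms(4) tropical_hnat[OF assms(1)] by metis
qed

lemma tropical_not_one_less_hnat:
  assumes "tropical K" "hzero K \<noteq> hone K"
  shows "\<not> hless K (hone K) (hnat K m)"
proof -
  have K: "halo K" using assms(1) by (simp add: tropical_def)
  have "\<not> hle K (hone K) (hzero K)"
    using assms halo_le_antisym[OF K] halo_zero_closed[OF K] halo_one_closed[OF K] tropical_zero_le
    by metis
  then show ?thesis by (simp add: tropical_hnat[OF assms(1)] hless_def)
qed

theorem lemma1p34:
  fixes K :: "'a halo_str" and R :: "'b halo_str"
  assumes "aura K" and "tropical K"
    and "aura R" and "positive R" and "tempered_growth R"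
  shows "tempered_growth (lex_prod K R)"
  unfolding tempered_growth_def
proof (intro allI ballI impI)
  fix P :: "nat poly" and x
  assume x: "x \<in> hcarrier (lex_prod K R)" and "P \<noteq> 0"
    and bound: "\<forall>n. hle (lex_prod K R) (hpow (lex_prod K R) x n) (hnat (lex_prod K R) (poly P n))"
  have K: "halo K" using assms(2) by (simp add: tropical_def)
  have zero_ne_one: "hzero K \<noteq> hone K" using assms(1) by (simp add: aura_def)
  obtain a b where ab: "x = (a, b)" by force
  have bound_ab: "hless K (hpow K a n) (hnat K (poly P n)) \<or>
      (hpow K a n = hnat K (poly P n) \<and> hle R (hpow R b n) (hnat R (poly P n)))" for n
    using bound by (simp add: ab hpow_lex_prod hnat_lex_prod hle_lex_prod)
  show "hle (lex_prod K R) x (hone (lex_prod K R))"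
  proof (cases "a = hzero K")
    case True
    then show ?thesis
      using x zero_ne_one tropical_zero_le[OF assms(2) halo_one_closed[OF K]]
      by (auto simp: ab lex_prod_def hless_def)
  next
    case False
    then have a: "a \<in> hcarrier K" and b: "b \<in> hcarrier R" using x by (auto simp: ab lex_prod_def)
    have "hle K a (hnat K (poly P 1))"
      using bound_ab[of 1] halo_le_refl[OF K a] unfolding hpow_1[OF K a] hless_def by auto
    then have "hle K a (hone K)" using tropical_le_hnat_imp_le_one[OF assms(2) a False] by blast
    moreover have "hle R b (hone R)" if "a = hone K"
    proof -
      have "hle R (hpow R b n) (hnat R (poly P n))" for n
        using bound_ab[of n] that hpow_one[OF K] tropical_not_one_less_hnat[OF assms(2) zero_ne_one]
        by metis
      then show ?thesis using assms(5) \<open>P \<noteq> 0\<close> b unfolding tempered_growth_def by blast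
    qed
    ultimately show ?thesis by (auto simp: ab lex_prod_def hless_def)
  qed
qed

end
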